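(* Let $\Bbbk$ be a field with $\operatorname{char}\Bbbk\ne2$, let $X$ be a linearly ordered set, and let $\Lambda_X=\mathrm{DiAs}\langle X\rangle/I$, where $I$ is the ideal generated by $\{x\dashv y+y\vdash x: x,y\in X\}$. Then the images of the words $\dot x_1x_2\cdots x_k$ with $k\ge1$, $x_i\in X$, $x_2<x_3<\dots<x_k$ form a linear basis of $\Lambda_X$.
   Context: An associative dialgebra is a vector space with bilinear operations $\vdash,\dashv$ satisfying $(x\dashv y)\vdash z=(x\vdash y)\vdash z$, $x\dashv(y\vdash z)=x\dashv(y\dashv z)$, $(x\vdash y)\vdash z=x\vdash(y\vdash z)$, $(x\dashv y)\dashv z=x\dashv(y\dashv z)$, $(x\vdash y)\dashv z=x\vdash(y\dashv z)$. $\mathrm{DiAs}\langle X\rangle$ is the free associative dialgebra on $X$, with basis the words $x_1\cdots\dot x_k\cdots x_n$ meaning $x_1\vdash\cdots\vdash x_{k-1}\vdash x_k\dashv x_{k+1}\dashv\cdots\dashv x_n$; thus $\dot x_1x_2\cdots x_k=x_1\dashv x_2\dashv\cdots\dashv x_k$. *)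

theory Defs
  imports Main
begin

text \<open>A basis word of the free associative dialgebra DiAs<X>: a nonempty word
  together with the (0-based) position of its marked (dotted) letter.
  The word (w, k) stands for w!0 |- ... |- w!k -| ... -| w!(n-1).\<close>
type_synonym 'x dword = "'x list \<times> nat"

definition dwords :: "'x dword set" where
  "dwords = {(w, k). k < length w}"

fun dw_left :: "'x dword \<Rightarrow> 'x dword \<Rightarrow> 'x dword" where
  "dw_left (u, i) (v, j) = (u @ v, i)"

fun dw_right :: "'x dword \<Rightarrow> 'x dword \<Rightarrow> 'x dword" where
  "dw_right (u, i) (v, j) = (u @ v, length u + j)"

definition diasV :: "('x dword \<Rightarrow> 'k::field) set" where
  "diasV = {f. finite {u. f u \<noteq> 0} \<and> {u. f u \<noteq> 0} \<subseteq> dwords}"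

definition sng :: "'x dword \<Rightarrow> 'x dword \<Rightarrow> 'k::field" where
  "sng u = (\<lambda>w. if w = u then 1 else 0)"

definition dleft :: "('x dword \<Rightarrow> 'k::field) \<Rightarrow> ('x dword \<Rightarrow> 'k) \<Rightarrow> ('x dword \<Rightarrow> 'k)" where
  "dleft f g = (\<lambda>w. \<Sum>u\<in>{u. f u \<noteq> 0}. \<Sum>v\<in>{v. g v \<noteq> 0}.
      if dw_left u v = w then f u * g v else 0)"

definition dright :: "('x dword \<Rightarrow> 'k::field) \<Rightarrow> ('x dword \<Rightarrow> 'k) \<Rightarrow> ('x dword \<Rightarrow> 'k)" where
  "dright f g = (\<lambda>w. \<Sum>u\<in>{u. f u \<noteq> 0}. \<Sum>v\<in>{v. g v \<noteq> 0}.
      if dw_right u v = w then f u * g v else 0)"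

definition is_dideal :: "('x dword \<Rightarrow> 'k::field) set \<Rightarrow> bool" where
  "is_dideal J \<longleftrightarrow> J \<subseteq> diasV \<and> (\<lambda>_. 0) \<in> J
     \<and> (\<forall>f\<in>J. \<forall>g\<in>J. (\<lambda>w. f w + g w) \<in> J)
     \<and> (\<forall>f\<in>J. \<forall>c. (\<lambda>w. c * f w) \<in> J)
     \<and> (\<forall>f\<in>J. \<forall>g\<in>diasV. dleft f g \<in> J \<and> dleft g f \<in> J \<and> dright f g \<in> J \<and> dright g f \<in> J)"

definition dideal_gen :: "('x dword \<Rightarrow> 'k::field) set \<Rightarrow> ('x dword \<Rightarrow> 'k) set" where
  "dideal_gen S = \<Inter>{J. is_dideal J \<and> S \<subseteq> J}"

definition lambda_gens :: "('x dword \<Rightarrow> 'k::field) set" where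
  "lambda_gens = {(\<lambda>w. dleft (sng ([x], 0)) (sng ([y], 0)) w + dright (sng ([y], 0)) (sng ([x], 0)) w)
                  | x y. True}"

definition lambda_basis :: "('x::linorder) dword set" where
  "lambda_basis = {(x # xs, 0) | x xs. sorted_wrt (<) xs}"

definition lincomb :: "('x dword \<Rightarrow> 'k::field) \<Rightarrow> 'x dword set \<Rightarrow> ('x dword \<Rightarrow> 'k)" where
  "lincomb c A = (\<lambda>w. \<Sum>b\<in>A. c b * sng b w)"

end

theory Submission
  imports Defs
begin

text \<open>Modulo \<open>I\<close> the generator relation, multiplied by words on either side, lets the
  dotted letter trade places with a neighbour at the cost of a sign, and makes any two
  neighbouring letters to the right of the dot anticommute. Hence every word is congruent
  to \<open>0\<close> (a repeated letter kills it because \<open>2 \<noteq> 0\<close>) or to \<open>\<plusminus>\<close> a word whose dotted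
  letter comes first and whose other letters increase strictly. For independence,
  \<open>\<Lambda>\<^sub>X\<close> is compared with \<open>\<Bbbk>X \<otimes> \<Lambda>(\<Bbbk>X)\<close>: the linear forms
  \<open>c(w, k) = (-1)\<^sup>k A(w\<^sub>k, w without w\<^sub>k)\<close> with \<open>A\<close> skew-symmetric in its list argument
  have a common kernel which is an ideal containing the generators, hence contains \<open>I\<close>;
  taking \<open>A(x, l) = [x = y] \<cdot> sign(l)\<close> gives forms dual to the basis words.\<close>

section \<open>Bilinear extensions and the pairing with linear forms\<close>

abbreviation supp :: "('a \<Rightarrow> 'k::zero) \<Rightarrow> 'a set" where
  "supp f \<equiv> {u. f u \<noteq> 0}"

definition bilin_ext :: "('a \<Rightarrow> 'b \<Rightarrow> 'c) \<Rightarrow> ('a \<Rightarrow> 'k::comm_ring_1) \<Rightarrow> ('b \<Rightarrow> 'k) \<Rightarrow> 'c \<Rightarrow> 'k" where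
  "bilin_ext P f g = (\<lambda>w. \<Sum>u\<in>supp f. \<Sum>v\<in>supp g. if P u v = w then f u * g v else 0)"

lemma dleft_eq_bilin_ext: "dleft = bilin_ext dw_left"
  by (intro ext) (simp add: dleft_def bilin_ext_def)

lemma dright_eq_bilin_ext: "dright = bilin_ext dw_right"
  by (intro ext) (simp add: dright_def bilin_ext_def)

definition pairing :: "('a \<Rightarrow> 'k::comm_ring_1) \<Rightarrow> ('a \<Rightarrow> 'k) \<Rightarrow> 'k" where
  "pairing c f = (\<Sum>u\<in>supp f. f u * c u)"

lemma pairing_eq_sum:
  assumes "finite U" "supp f \<subseteq> U"
  shows "pairing c f = (\<Sum>u\<in>U. f u * c u)"
  unfolding pairing_def by (rule sum.mono_neutral_left) (use assms in auto)

lemma pairing_add: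
  assumes "finite (supp f)" "finite (supp g)"
  shows "pairing c (\<lambda>w. f w + g w) = pairing c f + pairing c g"
proof -
  have fin: "finite (supp f \<union> supp g)" using assms by simp
  have "pairing c (\<lambda>w. f w + g w) = (\<Sum>u\<in>supp f \<union> supp g. f u * c u + g u * c u)"
    by (subst pairing_eq_sum[OF fin]) (auto simp: distrib_right)
  also have "\<dots> = pairing c f + pairing c g"
    by (simp add: sum.distrib pairing_eq_sum[OF fin])
  finally show ?thesis .
qed

lemma pairing_scale:
  assumes "finite (supp f)"
  shows "pairing c (\<lambda>w. d * f w) = d * pairing c f"
  by (subst pairing_eq_sum[OF assms]) (auto simp: pairing_def sum_distrib_left mult_ac)

lemma bilin_ext_eq_sum:
  assumes "finite U" "finite V" "supp f \<subseteq> U" "supp g \<subseteq> V"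
  shows "bilin_ext P f g w = (\<Sum>u\<in>U. \<Sum>v\<in>V. if P u v = w then f u * g v else 0)"
proof -
  have "bilin_ext P f g w = (\<Sum>u\<in>supp f. \<Sum>v\<in>V. if P u v = w then f u * g v else 0)"
    unfolding bilin_ext_def
    by (intro sum.cong refl sum.mono_neutral_left) (use assms in auto)
  also have "\<dots> = (\<Sum>u\<in>U. \<Sum>v\<in>V. if P u v = w then f u * g v else 0)"
    by (rule sum.mono_neutral_left) (use assms in \<open>auto intro: sum.neutral\<close>)
  finally show ?thesis .
qed

lemma supp_bilin_ext: "supp (bilin_ext P f g) \<subseteq> {P u v | u v. f u \<noteq> 0 \<and> g v \<noteq> 0}"
proof
  fix w assume "w \<in> supp (bilin_ext P f g)"
  then obtain u v where "f u \<noteq> 0" "g v \<noteq> 0" "P u v = w"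
    unfolding bilin_ext_def by (smt (verit, ccfv_threshold) mem_Collect_eq sum.neutral)
  then show "w \<in> {P u v | u v. f u \<noteq> 0 \<and> g v \<noteq> 0}" by blast
qed

lemma pairing_bilin_ext:
  assumes "finite (supp f)" "finite (supp g)"
  shows "pairing c (bilin_ext P f g) = (\<Sum>u\<in>supp f. \<Sum>v\<in>supp g. f u * g v * c (P u v))"
proof -
  define W where "W = {P u v | u v. f u \<noteq> 0 \<and> g v \<noteq> 0}"
  have W: "finite W" using assms unfolding W_def by (rule finite_image_set2)
  have "pairing c (bilin_ext P f g) = (\<Sum>w\<in>W. bilin_ext P f g w * c w)"
    using W supp_bilin_ext unfolding W_def by (rule pairing_eq_sum)
  also have "\<dots> = (\<Sum>w\<in>W. \<Sum>u\<in>supp f. \<Sum>v\<in>supp g. if P u v = w then f u * g v * c w else 0)"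
    unfolding bilin_ext_def by (simp add: sum_distrib_right if_distrib[of "\<lambda>x. x * _"] cong: if_cong)
  also have "\<dots> = (\<Sum>u\<in>supp f. \<Sum>w\<in>W. \<Sum>v\<in>supp g. if P u v = w then f u * g v * c w else 0)"
    by (rule sum.swap)
  also have "\<dots> = (\<Sum>u\<in>supp f. \<Sum>v\<in>supp g. \<Sum>w\<in>W. if P u v = w then f u * g v * c w else 0)"
    by (rule sum.cong[OF refl sum.swap])
  also have "\<dots> = (\<Sum>u\<in>supp f. \<Sum>v\<in>supp g. f u * g v * c (P u v))"
  proof (intro sum.cong refl)
    fix u v assume "u \<in> supp f" "v \<in> supp g"
    then have "P u v \<in> W" unfolding W_def by blast
    then show "(\<Sum>w\<in>W. if P u v = w then f u * g v * c w else 0) = f u * g v * c (P u v)"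
      using W by (simp add: sum.delta)
  qed
  finally show ?thesis .
qed

lemma pairing_bilin_ext_left:
  assumes "finite (supp f)" "finite (supp g)"
  shows "pairing c (bilin_ext P f g) = (\<Sum>v\<in>supp g. g v * pairing (\<lambda>u. c (P u v)) f)"
proof -
  have "(\<Sum>v\<in>supp g. g v * pairing (\<lambda>u. c (P u v)) f) = (\<Sum>u\<in>supp f. \<Sum>v\<in>supp g. f u * g v * c (P u v))"
    unfolding pairing_def by (subst sum.swap) (simp add: sum_distrib_left mult_ac)
  then show ?thesis using pairing_bilin_ext[OF assms] by simp
qed

lemma pairing_bilin_ext_right:
  assumes "finite (supp f)" "finite (supp g)"
  shows "pairing c (bilin_ext P f g) = (\<Sum>u\<in>supp f. f u * pairing (\<lambda>v. c (P u v)) g)"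
proof -
  have "(\<Sum>u\<in>supp f. f u * pairing (\<lambda>v. c (P u v)) g) = (\<Sum>u\<in>supp f. \<Sum>v\<in>supp g. f u * g v * c (P u v))"
    unfolding pairing_def by (simp add: sum_distrib_left mult_ac)
  then show ?thesis using pairing_bilin_ext[OF assms] by simp
qed

lemma supp_sng: "supp (sng u :: _ \<Rightarrow> 'k::field) = {u}"
  by (auto simp: sng_def)

lemma pairing_sng: "pairing c (sng u) = c u"
  by (simp add: pairing_def supp_sng) (simp add: sng_def)

lemma bilin_ext_sng_sng: "bilin_ext P (sng a) (sng b) = (sng (P a b) :: _ \<Rightarrow> 'k::field)"
  by (intro ext) (auto simp: bilin_ext_def supp_sng sng_def)

lemma bilin_ext_sng_add:
  "bilin_ext P (sng p) (\<lambda>w. sng a w + sng b w) = (\<lambda>w. sng (P p a) w + (sng (P p b) w :: 'k::field))"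
  by (intro ext, subst bilin_ext_eq_sum[where U = "{p}" and V = "{a, b}"])
    (cases "a = b"; auto simp: sng_def)+

lemma bilin_ext_add_sng:
  "bilin_ext P (\<lambda>w. sng a w + sng b w) (sng p) = (\<lambda>w. sng (P a p) w + (sng (P b p) w :: 'k::field))"
  by (intro ext, subst bilin_ext_eq_sum[where U = "{a, b}" and V = "{p}"])
    (cases "a = b"; auto simp: sng_def)+

lemma lincomb_eq: "finite A \<Longrightarrow> lincomb c A w = (if w \<in> A then c w else 0)"
  unfolding lincomb_def sng_def by (simp add: if_distrib[of "\<lambda>x. c _ * x"] cong: if_cong)

lemma dw_left_in_dwords: "u \<in> dwords \<Longrightarrow> v \<in> dwords \<Longrightarrow> dw_left u v \<in> dwords"
  by (cases u; cases v) (auto simp: dwords_def)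

lemma dw_right_in_dwords: "u \<in> dwords \<Longrightarrow> v \<in> dwords \<Longrightarrow> dw_right u v \<in> dwords"
  by (cases u; cases v) (auto simp: dwords_def)

lemma sng_in_diasV: "u \<in> dwords \<Longrightarrow> sng u \<in> diasV"
  by (auto simp: diasV_def sng_def)

lemma diasV_add:
  assumes "f \<in> diasV" "g \<in> diasV"
  shows "(\<lambda>w. f w + g w) \<in> diasV"
proof -
  have "supp (\<lambda>w. f w + g w) \<subseteq> supp f \<union> supp g" by auto
  then show ?thesis using assms unfolding diasV_def by (auto intro: finite_subset)
qed

lemma diasV_scale: "f \<in> diasV \<Longrightarrow> (\<lambda>w. c * f w) \<in> diasV"
  unfolding diasV_def by (auto intro: finite_subset[of _ "supp f"])

lemma bilin_ext_in_diasV: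
  assumes "f \<in> diasV" "g \<in> diasV" "\<And>u v. u \<in> dwords \<Longrightarrow> v \<in> dwords \<Longrightarrow> P u v \<in> dwords"
  shows "bilin_ext P f g \<in> diasV"
proof -
  have fin: "finite (supp f)" "finite (supp g)" and sd: "supp f \<subseteq> dwords" "supp g \<subseteq> dwords"
    using assms(1,2) by (auto simp: diasV_def)
  have "finite (supp (bilin_ext P f g))"
    by (rule finite_subset[OF supp_bilin_ext finite_image_set2]) (use fin in simp_all)
  moreover have "supp (bilin_ext P f g) \<subseteq> dwords"
    using supp_bilin_ext[of P f g] sd assms(3) by blast
  ultimately show ?thesis unfolding diasV_def by blast
qed

lemma dleft_in_diasV: "f \<in> diasV \<Longrightarrow> g \<in> diasV \<Longrightarrow> dleft f g \<in> diasV"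
  unfolding dleft_eq_bilin_ext by (rule bilin_ext_in_diasV) (auto intro: dw_left_in_dwords)

lemma dright_in_diasV: "f \<in> diasV \<Longrightarrow> g \<in> diasV \<Longrightarrow> dright f g \<in> diasV"
  unfolding dright_eq_bilin_ext by (rule bilin_ext_in_diasV) (auto intro: dw_right_in_dwords)

lemma is_dideal_Inter:
  assumes "\<F> \<noteq> {}" "\<And>J. J \<in> \<F> \<Longrightarrow> is_dideal J"
  shows "is_dideal (\<Inter>\<F>)"
  using assms unfolding is_dideal_def
  by (intro conjI ballI allI; (elim exE)?; simp; blast)

lemma is_dideal_diasV: "is_dideal diasV"
  unfolding is_dideal_def
  by (auto simp: diasV_add diasV_scale dleft_in_diasV dright_in_diasV) (simp add: diasV_def)

lemma is_dideal_dideal_gen: "S \<subseteq> diasV \<Longrightarrow> is_dideal (dideal_gen S)"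
  unfolding dideal_gen_def by (rule is_dideal_Inter) (use is_dideal_diasV in auto)

lemma dideal_gen_superset: "S \<subseteq> dideal_gen S"
  unfolding dideal_gen_def by blast

lemma dideal_gen_least: "is_dideal J \<Longrightarrow> S \<subseteq> J \<Longrightarrow> dideal_gen S \<subseteq> J"
  unfolding dideal_gen_def by blast

lemma lambda_gen_eq: "(\<lambda>w. dleft (sng ([x], 0)) (sng ([y], 0)) w + dright (sng ([y], 0)) (sng ([x], 0)) w)
   = (\<lambda>w. sng ([x, y], 0) w + (sng ([y, x], 1) w :: 'k::field))"
  by (simp add: dleft_eq_bilin_ext dright_eq_bilin_ext bilin_ext_sng_sng)

lemma lambda_gens_eq: "lambda_gens = {(\<lambda>w. sng ([x, y], 0) w + sng ([y, x], 1) w) | x y. True}"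
  unfolding lambda_gens_def lambda_gen_eq ..

lemma lambda_gens_subset_diasV: "lambda_gens \<subseteq> diasV"
  unfolding lambda_gens_eq by (auto intro!: diasV_add sng_in_diasV simp: dwords_def)

section \<open>Spanning\<close>

definition del_nth :: "nat \<Rightarrow> 'a list \<Rightarrow> 'a list" where
  "del_nth k w = take k w @ drop (Suc k) w"

locale lambda_ideal =
  fixes I :: "('x::linorder dword \<Rightarrow> 'k::field) set"
  assumes is_dideal: "is_dideal I"
    and lambda_gens_subset: "lambda_gens \<subseteq> I"
begin

lemma zero_mem: "(\<lambda>w. 0) \<in> I"
  and add_mem: "f \<in> I \<Longrightarrow> g \<in> I \<Longrightarrow> (\<lambda>w. f w + g w) \<in> I"
  and scale_mem: "f \<in> I \<Longrightarrow> (\<lambda>w. c * f w) \<in> I"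
  and dleft_mem: "f \<in> I \<Longrightarrow> g \<in> diasV \<Longrightarrow> dleft f g \<in> I" "f \<in> I \<Longrightarrow> g \<in> diasV \<Longrightarrow> dleft g f \<in> I"
  and dright_mem: "f \<in> I \<Longrightarrow> g \<in> diasV \<Longrightarrow> dright g f \<in> I"
  using is_dideal unfolding is_dideal_def by blast+

definition cong_I :: "('x dword \<Rightarrow> 'k) \<Rightarrow> ('x dword \<Rightarrow> 'k) \<Rightarrow> bool" where
  "cong_I f g \<longleftrightarrow> (\<lambda>w. f w - g w) \<in> I"

lemma cong_I_refl: "cong_I f f"
  unfolding cong_I_def using zero_mem by simp

lemma cong_I_trans: "cong_I f g \<Longrightarrow> cong_I g h \<Longrightarrow> cong_I f h"
  unfolding cong_I_def by (drule (1) add_mem) simp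

lemma cong_I_scale: "cong_I f g \<Longrightarrow> cong_I (\<lambda>w. c * f w) (\<lambda>w. c * g w)"
  unfolding cong_I_def by (drule scale_mem[of _ c]) (simp add: right_diff_distrib)

lemma cong_I_add: "cong_I f1 g1 \<Longrightarrow> cong_I f2 g2 \<Longrightarrow> cong_I (\<lambda>w. f1 w + f2 w) (\<lambda>w. g1 w + g2 w)"
  unfolding cong_I_def by (drule (1) add_mem) (simp add: algebra_simps)

lemma cong_I_sum:
  "finite U \<Longrightarrow> (\<And>u. u \<in> U \<Longrightarrow> cong_I (f u) (g u)) \<Longrightarrow>
    cong_I (\<lambda>w. \<Sum>u\<in>U. f u w) (\<lambda>w. \<Sum>u\<in>U. g u w)"
  by (induction U rule: finite_induct) (auto simp: cong_I_refl intro: cong_I_add)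

lemma cong_I_neg_if_sum_mem: "(\<lambda>w. f w + g w) \<in> I \<Longrightarrow> cong_I f (\<lambda>w. - g w)"
  unfolding cong_I_def by simp

lemma binomial_mem_mult:
  assumes "(\<lambda>w. sng a w + sng b w) \<in> I" "v \<in> dwords"
  shows "(\<lambda>w. sng (dw_left a v) w + sng (dw_left b v) w) \<in> I"
    and "(\<lambda>w. sng (dw_left v a) w + sng (dw_left v b) w) \<in> I"
    and "(\<lambda>w. sng (dw_right v a) w + sng (dw_right v b) w) \<in> I"
  using dleft_mem[OF assms(1) sng_in_diasV[OF assms(2)]]
    dright_mem[OF assms(1) sng_in_diasV[OF assms(2)]]
  by (simp_all add: dleft_eq_bilin_ext dright_eq_bilin_ext bilin_ext_sng_add bilin_ext_add_sng)

lemma lambda_gen_mem: "(\<lambda>w. sng ([x, y], 0) w + sng ([y, x], 1) w) \<in> I"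
  using lambda_gens_subset unfolding lambda_gens_eq by blast

lemma dot_swap_mem: "(\<lambda>w. sng (p @ x # y # r, length p) w + sng (p @ y # x # r, Suc (length p)) w) \<in> I"
proof -
  have "(\<lambda>w. sng (x # y # r, 0) w + sng (y # x # r, 1) w) \<in> I"
  proof (cases "r = []")
    case False
    then show ?thesis
      using binomial_mem_mult(1)[OF lambda_gen_mem, of "(r, 0)" x y] by (simp add: dwords_def)
  qed (use lambda_gen_mem in simp)
  then show ?thesis
    using binomial_mem_mult(3)[of "(x # y # r, 0)" "(y # x # r, 1)" "(p, 0)"]
    by (cases "p = []") (simp_all add: dwords_def)
qed

lemma tail_swap_mem:
  assumes "p \<noteq> []"
  shows "(\<lambda>w. sng (p @ y # z # r, 0) w + sng (p @ z # y # r, 0) w) \<in> I"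
proof -
  have "(\<lambda>w. sng (p @ [y, z], 0) w + sng (p @ [z, y], 0) w) \<in> I"
    using binomial_mem_mult(2)[OF lambda_gen_mem, of "(p, 0)" y z] assms by (simp add: dwords_def)
  then show ?thesis
    using binomial_mem_mult(1)[of "(p @ [y, z], 0)" "(p @ [z, y], 0)" "(r, 0)"]
    by (cases "r = []") (simp_all add: dwords_def)
qed

lemma cong_I_dot_to_front:
  "k < length w \<Longrightarrow> cong_I (sng (w, k)) (\<lambda>z. (-1) ^ k * sng (w ! k # del_nth k w, 0) z)"
proof (induction k arbitrary: w)
  case 0
  then show ?case by (cases w) (auto simp: del_nth_def intro: cong_I_refl)
next
  case (Suc k)
  define p y x r where "p = take k w" and "y = w ! k" and "x = w ! Suc k" and "r = drop (Suc (Suc k)) w"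
  have lp: "length p = k" using Suc.prems by (simp add: p_def)
  have w: "w = p @ y # x # r"
    unfolding p_def y_def x_def r_def using Suc.prems
    by (metis Cons_nth_drop_Suc Suc_lessD append_take_drop_id)
  have "cong_I (sng (w, Suc k)) (\<lambda>z. - sng (p @ x # y # r, k) z)"
    using dot_swap_mem[of p x y r] unfolding w lp by (intro cong_I_neg_if_sum_mem) (simp add: add.commute)
  moreover have "cong_I (\<lambda>z. - sng (p @ x # y # r, k) z) (\<lambda>z. (-1) ^ Suc k * sng (x # p @ y # r, 0) z)"
    using cong_I_scale[OF Suc.IH[of "p @ x # y # r"], of "-1"] lp by (simp add: nth_append del_nth_def)
  ultimately show ?case
    using cong_I_trans lp unfolding w by (simp add: nth_append del_nth_def)
qed

lemma cong_I_insert_sorted: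
  assumes "(2::'k) \<noteq> 0" "sorted_wrt (<) m" "q \<noteq> []"
  shows "\<exists>s m'. sorted_wrt (<) m' \<and> set m' \<subseteq> insert a (set m) \<and>
     cong_I (sng (q @ a # m, 0)) (\<lambda>z. s * sng (q @ m', 0) z)"
  using assms(2,3)
proof (induction m arbitrary: q)
  case Nil
  show ?case by (intro exI[of _ 1] exI[of _ "[a]"]) (simp add: cong_I_refl)
next
  case (Cons b m)
  consider "a < b" | "a = b" | "b < a" by fastforce
  then show ?case
  proof cases
    case 1
    then show ?thesis using Cons.prems
      by (intro exI[of _ 1] exI[of _ "a # b # m"]) (auto simp: cong_I_refl)
  next
    case 2
    have "(\<lambda>w. 2 * sng (q @ a # a # m, 0) w) \<in> I"
      using tail_swap_mem[OF Cons.prems(2), of a a m] by simp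
    then have "(\<lambda>w. inverse 2 * (2 * sng (q @ a # a # m, 0) w)) \<in> I"
      by (rule scale_mem)
    then have "cong_I (sng (q @ a # b # m, 0)) (\<lambda>z. 0 * sng (q @ [], 0) z)"
      unfolding cong_I_def 2 using assms(1) by (simp add: field_simps)
    then show ?thesis by (intro exI[of _ 0] exI[of _ "[]"]) simp
  next
    case 3
    have sm: "sorted_wrt (<) m" and bm: "\<forall>x\<in>set m. b < x" using Cons.prems by auto
    obtain s m' where m': "sorted_wrt (<) m'" "set m' \<subseteq> insert a (set m)"
      "cong_I (sng ((q @ [b]) @ a # m, 0)) (\<lambda>z. s * sng ((q @ [b]) @ m', 0) z)"
      using Cons.IH[OF sm, of "q @ [b]"] by auto
    have "cong_I (sng (q @ a # b # m, 0)) (\<lambda>z. - sng (q @ b # a # m, 0) z)"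
      using tail_swap_mem[OF Cons.prems(2), of a b m] by (rule cong_I_neg_if_sum_mem)
    moreover have "cong_I (\<lambda>z. - sng (q @ b # a # m, 0) z) (\<lambda>z. (- s) * sng (q @ b # m', 0) z)"
      using cong_I_scale[OF m'(3), of "-1"] by simp
    ultimately have "cong_I (sng (q @ a # b # m, 0)) (\<lambda>z. (- s) * sng (q @ b # m', 0) z)"
      by (rule cong_I_trans)
    moreover have "sorted_wrt (<) (b # m')" "set (b # m') \<subseteq> insert a (set (b # m))"
      using m' bm 3 by auto
    ultimately show ?thesis by blast
  qed
qed

lemma cong_I_sort_tail:
  assumes "(2::'k) \<noteq> 0" "q \<noteq> []"
  shows "\<exists>s m. sorted_wrt (<) m \<and> cong_I (sng (q @ l, 0)) (\<lambda>z. s * sng (q @ m, 0) z)"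
  using assms(2)
proof (induction l arbitrary: q)
  case Nil
  show ?case by (intro exI[of _ 1] exI[of _ "[]"]) (simp add: cong_I_refl)
next
  case (Cons a l)
  obtain s m where m: "sorted_wrt (<) m" "cong_I (sng ((q @ [a]) @ l, 0)) (\<lambda>z. s * sng ((q @ [a]) @ m, 0) z)"
    using Cons.IH[of "q @ [a]"] by auto
  obtain s' m' where m': "sorted_wrt (<) m'" "cong_I (sng (q @ a # m, 0)) (\<lambda>z. s' * sng (q @ m', 0) z)"
    using cong_I_insert_sorted[OF assms(1) m(1) Cons.prems] by blast
  have "cong_I (\<lambda>z. s * sng (q @ a # m, 0) z) (\<lambda>z. (s * s') * sng (q @ m', 0) z)"
    using cong_I_scale[OF m'(2), of s] by (simp add: mult.assoc)
  then have "cong_I (sng (q @ a # l, 0)) (\<lambda>z. (s * s') * sng (q @ m', 0) z)"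
    using cong_I_trans[of _ "\<lambda>z. s * sng (q @ a # m, 0) z"] m(2) by simp
  then show ?case using m'(1) by blast
qed

lemma cong_I_dword_basis:
  assumes "(2::'k) \<noteq> 0" "u \<in> dwords"
  shows "\<exists>s t. t \<in> lambda_basis \<and> cong_I (sng u) (\<lambda>z. s * sng t z)"
proof -
  obtain w k where u: "u = (w, k)" "k < length w" using assms(2) by (auto simp: dwords_def)
  obtain s m where m: "sorted_wrt (<) m"
    "cong_I (sng (w ! k # del_nth k w, 0)) (\<lambda>z. s * sng (w ! k # m, 0) z)"
    using cong_I_sort_tail[OF assms(1), of "[w ! k]" "del_nth k w"] by auto
  have "cong_I (sng u) (\<lambda>z. ((-1) ^ k * s) * sng (w ! k # m, 0) z)"
    using cong_I_trans[OF cong_I_dot_to_front[OF u(2)] cong_I_scale[OF m(2), of "(-1) ^ k"]] u(1)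
    by (simp add: mult.assoc)
  moreover have "(w ! k # m, 0) \<in> lambda_basis" using m(1) by (simp add: lambda_basis_def)
  ultimately show ?thesis by blast
qed

lemma lambda_basis_spans:
  assumes "(2::'k) \<noteq> 0" "f \<in> diasV"
  shows "\<exists>A c. finite A \<and> A \<subseteq> lambda_basis \<and> (\<lambda>w. f w - lincomb c A w) \<in> I"
proof -
  have U: "finite (supp f)" "supp f \<subseteq> dwords" using assms(2) by (auto simp: diasV_def)
  obtain s t where st: "\<And>u. u \<in> dwords \<Longrightarrow> t u \<in> lambda_basis \<and> cong_I (sng u) (\<lambda>z. s u * sng (t u) z)"
    using cong_I_dword_basis[OF assms(1)] by metis
  define c where "c b = (\<Sum>u\<in>{u \<in> supp f. t u = b}. f u * s u)" for b
  have "f = lincomb f (supp f)"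
    using U(1) by (auto simp: lincomb_eq)
  moreover have "cong_I (lincomb f (supp f)) (\<lambda>w. \<Sum>u\<in>supp f. f u * (s u * sng (t u) w))"
    unfolding lincomb_def using U by (intro cong_I_sum cong_I_scale) (auto dest: st)
  moreover have "(\<lambda>w. \<Sum>u\<in>supp f. f u * (s u * sng (t u) w)) = lincomb c (t ` supp f)"
  proof
    fix w
    have "(\<Sum>u\<in>supp f. f u * (s u * sng (t u) w))
        = (\<Sum>b\<in>t ` supp f. \<Sum>u\<in>{u \<in> supp f. t u = b}. f u * (s u * sng (t u) w))"
      by (rule sum.image_gen[OF U(1)])
    also have "\<dots> = lincomb c (t ` supp f) w"
      unfolding lincomb_def c_def sum_distrib_right by (intro sum.cong refl) (auto simp: mult_ac)
    finally show "(\<Sum>u\<in>supp f. f u * (s u * sng (t u) w)) = lincomb c (t ` supp f) w" .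
  qed
  ultimately have "cong_I f (lincomb c (t ` supp f))" by simp
  moreover have "finite (t ` supp f)" "t ` supp f \<subseteq> lambda_basis" using U st by auto
  ultimately show ?thesis unfolding cong_I_def by blast
qed

end

section \<open>Linear independence\<close>

definition skew_symmetric :: "('x list \<Rightarrow> 'k::comm_ring_1) \<Rightarrow> bool" where
  "skew_symmetric F \<longleftrightarrow> (\<forall>l1 p q l2. F (l1 @ p # q # l2) = - F (l1 @ q # p # l2))"

lemma skew_symmetricD: "skew_symmetric F \<Longrightarrow> F (l1 @ p # q # l2) = - F (l1 @ q # p # l2)"
  unfolding skew_symmetric_def by blast

lemma skew_symmetric_append_left:
  assumes "skew_symmetric F"
  shows "skew_symmetric (\<lambda>l. F (b @ l))"
  unfolding skew_symmetric_def
proof (intro allI)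
  fix l1 p q l2
  show "F (b @ l1 @ p # q # l2) = - F (b @ l1 @ q # p # l2)"
    using skew_symmetricD[OF assms, of "b @ l1" p q l2] by simp
qed

lemma skew_symmetric_append_right:
  assumes "skew_symmetric F"
  shows "skew_symmetric (\<lambda>l. F (l @ b))"
  unfolding skew_symmetric_def
proof (intro allI)
  fix l1 p q l2
  show "F ((l1 @ p # q # l2) @ b) = - F ((l1 @ q # p # l2) @ b)"
    using skew_symmetricD[OF assms, of l1 p q "l2 @ b"] by simp
qed

lemma skew_symmetric_mult_length:
  assumes "skew_symmetric F"
  shows "skew_symmetric (\<lambda>l. g (length l) * F l)"
  unfolding skew_symmetric_def
proof (intro allI)
  fix l1 p q l2
  show "g (length (l1 @ p # q # l2)) * F (l1 @ p # q # l2) = - (g (length (l1 @ q # p # l2)) * F (l1 @ q # p # l2))"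
    using skew_symmetricD[OF assms, of l1 p q l2] by simp
qed

lemma skew_symmetric_move_left:
  "skew_symmetric F \<Longrightarrow> F (l1 @ m @ z # l2) = (-1) ^ length m * F (l1 @ z # m @ l2)"
proof (induction m arbitrary: l1)
  case (Cons y m)
  have "F (l1 @ (y # m) @ z # l2) = (-1) ^ length m * F ((l1 @ [y]) @ z # m @ l2)"
    using Cons.IH[OF Cons.prems, of "l1 @ [y]"] by simp
  also have "F ((l1 @ [y]) @ z # m @ l2) = - F (l1 @ z # y # m @ l2)"
    using skew_symmetricD[OF Cons.prems, of l1 y z "m @ l2"] by simp
  finally show ?case by simp
qed simp

lemma skew_symmetric_del_nth:
  assumes "skew_symmetric F" "i < length a"
  shows "F (l1 @ a @ l2) = (-1) ^ i * F (l1 @ a ! i # del_nth i a @ l2)"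
proof -
  have "F (l1 @ a @ l2) = F (l1 @ take i a @ a ! i # (drop (Suc i) a @ l2))"
    by (subst id_take_nth_drop[OF assms(2)]) simp
  also have "\<dots> = (-1) ^ length (take i a) * F (l1 @ a ! i # take i a @ drop (Suc i) a @ l2)"
    by (rule skew_symmetric_move_left[OF assms(1)])
  finally show ?thesis using assms(2) by (simp add: del_nth_def)
qed

text \<open>These are the linear forms factoring through \<open>x\<^sub>1\<cdots>x\<^sub>k\<^sup>\<bullet>\<cdots>x\<^sub>n \<mapsto>
  (-1)\<^sup>k\<^sup>-\<^sup>1 x\<^sub>k \<otimes> x\<^sub>1 \<and> \<cdots> \<and> x\<^sub>k\<^sub>-\<^sub>1 \<and> x\<^sub>k\<^sub>+\<^sub>1 \<and> \<cdots> \<and> x\<^sub>n\<close> into \<open>\<Bbbk>X \<otimes> \<Lambda>(\<Bbbk>X)\<close>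
  (positions are 0-based here, hence the sign \<open>(-1)\<^sup>k\<close>).\<close>
definition exterior_form :: "('x dword \<Rightarrow> 'k::comm_ring_1) \<Rightarrow> bool" where
  "exterior_form c \<longleftrightarrow> (\<exists>A. (\<forall>x. skew_symmetric (A x)) \<and>
     (\<forall>w k. k < length w \<longrightarrow> c (w, k) = (-1) ^ k * A (w ! k) (del_nth k w)))"

lemma exterior_formI:
  assumes "\<And>x. skew_symmetric (A x)"
    and "\<And>w k. k < length w \<Longrightarrow> c (w, k) = (-1) ^ k * A (w ! k) (del_nth k w)"
  shows "exterior_form c"
  unfolding exterior_form_def using assms by blast

lemma exterior_form_dw_left_fst:
  assumes "exterior_form c" "(b, j) \<in> dwords"
  shows "exterior_form (\<lambda>u. c (dw_left u (b, j)))"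
proof -
  obtain A where A: "\<And>x. skew_symmetric (A x)"
    "\<And>w k. k < length w \<Longrightarrow> c (w, k) = (-1) ^ k * A (w ! k) (del_nth k w)"
    using assms(1) unfolding exterior_form_def by blast
  show ?thesis
  proof (rule exterior_formI[where A = "\<lambda>x l. A x (l @ b)"])
    show "skew_symmetric (\<lambda>l. A x (l @ b))" for x
      by (rule skew_symmetric_append_right[OF A(1)])
    show "c (dw_left (a, i) (b, j)) = (-1) ^ i * A (a ! i) (del_nth i a @ b)" if "i < length a" for a i
      using A(2)[of i "a @ b"] that by (simp add: del_nth_def nth_append)
  qed
qed

lemma exterior_form_dw_left_snd:
  assumes "exterior_form c" "(b, j) \<in> dwords"
  shows "exterior_form (\<lambda>u. c (dw_left (b, j) u))"
proof -
  obtain A where A: "\<And>x. skew_symmetric (A x)"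
    "\<And>w k. k < length w \<Longrightarrow> c (w, k) = (-1) ^ k * A (w ! k) (del_nth k w)"
    using assms(1) unfolding exterior_form_def by blast
  have j: "j < length b" using assms(2) by (simp add: dwords_def)
  show ?thesis
  proof (rule exterior_formI[where A = "\<lambda>x l. (-1) ^ j * A (b ! j) ((del_nth j b @ [x]) @ l)"])
    show "skew_symmetric (\<lambda>l. (-1) ^ j * A (b ! j) ((del_nth j b @ [x]) @ l))" for x
      using skew_symmetric_mult_length[OF skew_symmetric_append_left[OF A(1), of "b ! j" "del_nth j b @ [x]"],
          of "\<lambda>_. (-1) ^ j"]
      by simp
    show "c (dw_left (b, j) (a, i)) = (-1) ^ i * ((-1) ^ j * A (b ! j) ((del_nth j b @ [a ! i]) @ del_nth i a))"
      if i: "i < length a" for a i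
    proof -
      have "c (dw_left (b, j) (a, i)) = (-1) ^ j * A (b ! j) (del_nth j b @ a)"
        using A(2)[of j "b @ a"] j by (simp add: del_nth_def nth_append)
      also have "A (b ! j) (del_nth j b @ a) = (-1) ^ i * A (b ! j) (del_nth j b @ a ! i # del_nth i a)"
        using skew_symmetric_del_nth[OF A(1) i, of _ "del_nth j b" "[]"] by simp
      finally show ?thesis by (simp add: mult_ac)
    qed
  qed
qed

lemma exterior_form_dw_right_fst:
  assumes "exterior_form c" "(b, j) \<in> dwords"
  shows "exterior_form (\<lambda>u. c (dw_right u (b, j)))"
proof -
  obtain A where A: "\<And>x. skew_symmetric (A x)"
    "\<And>w k. k < length w \<Longrightarrow> c (w, k) = (-1) ^ k * A (w ! k) (del_nth k w)"
    using assms(1) unfolding exterior_form_def by blast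
  have j: "j < length b" using assms(2) by (simp add: dwords_def)
  show ?thesis
  proof (rule exterior_formI[where A = "\<lambda>x l. (-1) ^ (Suc (length l) + j) * A (b ! j) ([x] @ l @ del_nth j b)"])
    show "skew_symmetric (\<lambda>l. (-1) ^ (Suc (length l) + j) * A (b ! j) ([x] @ l @ del_nth j b))" for x
      using skew_symmetric_mult_length[OF skew_symmetric_append_left[OF
          skew_symmetric_append_right[OF A(1), of "b ! j" "del_nth j b"], of "[x]"],
          of "\<lambda>n. (-1) ^ (Suc n + j)"]
      by simp
    show "c (dw_right (a, i) (b, j))
        = (-1) ^ i * ((-1) ^ (Suc (length (del_nth i a)) + j) * A (b ! j) ([a ! i] @ del_nth i a @ del_nth j b))"
      if i: "i < length a" for a i
    proof -
      have "c (dw_right (a, i) (b, j)) = (-1) ^ (length a + j) * A (b ! j) (a @ del_nth j b)"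
        using A(2)[of "length a + j" "a @ b"] j by (simp add: del_nth_def nth_append)
      also have "A (b ! j) (a @ del_nth j b) = (-1) ^ i * A (b ! j) (a ! i # del_nth i a @ del_nth j b)"
        using skew_symmetric_del_nth[OF A(1) i, of _ "[]" "del_nth j b"] by simp
      moreover have "Suc (length (del_nth i a)) = length a" using i by (simp add: del_nth_def)
      ultimately show ?thesis by (simp add: mult_ac)
    qed
  qed
qed

lemma exterior_form_dw_right_snd:
  assumes "exterior_form c"
  shows "exterior_form (\<lambda>u. c (dw_right (b, j) u))"
proof -
  obtain A where A: "\<And>x. skew_symmetric (A x)"
    "\<And>w k. k < length w \<Longrightarrow> c (w, k) = (-1) ^ k * A (w ! k) (del_nth k w)"
    using assms(1) unfolding exterior_form_def by blast
  show ?thesis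
  proof (rule exterior_formI[where A = "\<lambda>x l. (-1) ^ length b * A x (b @ l)"])
    show "skew_symmetric (\<lambda>l. (-1) ^ length b * A x (b @ l))" for x
      using skew_symmetric_mult_length[OF skew_symmetric_append_left[OF A(1), of x b],
          of "\<lambda>_. (-1) ^ length b"]
      by simp
    show "c (dw_right (b, j) (a, i)) = (-1) ^ i * ((-1) ^ length b * A (a ! i) (b @ del_nth i a))"
      if "i < length a" for a i
      using A(2)[of "length b + i" "b @ a"] that by (simp add: del_nth_def nth_append power_add mult_ac)
  qed
qed

definition exterior_annihilator :: "('x dword \<Rightarrow> 'k::field) set" where
  "exterior_annihilator = {f \<in> diasV. \<forall>c. exterior_form c \<longrightarrow> pairing c f = 0}"

lemma exterior_annihilator_bilin_ext_fst:
  fixes f g :: "'x dword \<Rightarrow> 'k::field"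
  assumes f: "f \<in> exterior_annihilator" and g: "g \<in> diasV"
    and P: "\<And>u v. u \<in> dwords \<Longrightarrow> v \<in> dwords \<Longrightarrow> P u v \<in> dwords"
    and form: "\<And>(c :: _ \<Rightarrow> 'k) v. exterior_form c \<Longrightarrow> v \<in> dwords \<Longrightarrow> exterior_form (\<lambda>u. c (P u v))"
  shows "bilin_ext P f g \<in> exterior_annihilator"
proof -
  have fV: "f \<in> diasV" and fin: "finite (supp f)" "finite (supp g)" and sg: "supp g \<subseteq> dwords"
    using f g by (auto simp: exterior_annihilator_def diasV_def)
  have "pairing c (bilin_ext P f g) = 0" if c: "exterior_form c" for c
    unfolding pairing_bilin_ext_left[OF fin]
    using f form[OF c] sg by (intro sum.neutral) (auto simp: exterior_annihilator_def)
  then show ?thesis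
    using bilin_ext_in_diasV[OF fV g P] by (simp add: exterior_annihilator_def)
qed

lemma exterior_annihilator_bilin_ext_snd:
  fixes f g :: "'x dword \<Rightarrow> 'k::field"
  assumes f: "f \<in> exterior_annihilator" and g: "g \<in> diasV"
    and P: "\<And>u v. u \<in> dwords \<Longrightarrow> v \<in> dwords \<Longrightarrow> P u v \<in> dwords"
    and form: "\<And>(c :: _ \<Rightarrow> 'k) u. exterior_form c \<Longrightarrow> u \<in> dwords \<Longrightarrow> exterior_form (\<lambda>v. c (P u v))"
  shows "bilin_ext P g f \<in> exterior_annihilator"
proof -
  have fV: "f \<in> diasV" and fin: "finite (supp g)" "finite (supp f)" and sg: "supp g \<subseteq> dwords"
    using f g by (auto simp: exterior_annihilator_def diasV_def)
  have "pairing c (bilin_ext P g f) = 0" if c: "exterior_form c" for c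
    unfolding pairing_bilin_ext_right[OF fin]
    using f form[OF c] sg by (intro sum.neutral) (auto simp: exterior_annihilator_def)
  then show ?thesis
    using bilin_ext_in_diasV[OF g fV P] by (simp add: exterior_annihilator_def)
qed

lemma is_dideal_exterior_annihilator: "is_dideal exterior_annihilator"
proof -
  have forms: "\<And>c v. exterior_form c \<Longrightarrow> v \<in> dwords \<Longrightarrow> exterior_form (\<lambda>u. c (dw_left u v))"
    "\<And>c v. exterior_form c \<Longrightarrow> v \<in> dwords \<Longrightarrow> exterior_form (\<lambda>u. c (dw_left v u))"
    "\<And>c v. exterior_form c \<Longrightarrow> v \<in> dwords \<Longrightarrow> exterior_form (\<lambda>u. c (dw_right u v))"
    "\<And>c v. exterior_form c \<Longrightarrow> exterior_form (\<lambda>u. c (dw_right v u))"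
    using exterior_form_dw_left_fst exterior_form_dw_left_snd exterior_form_dw_right_fst
      exterior_form_dw_right_snd by fast+
  show ?thesis
    unfolding is_dideal_def dleft_eq_bilin_ext dright_eq_bilin_ext
  proof (intro conjI ballI allI)
    fix f g :: "'a dword \<Rightarrow> 'b" assume f: "f \<in> exterior_annihilator" and g: "g \<in> diasV"
    show "bilin_ext dw_left f g \<in> exterior_annihilator"
      by (rule exterior_annihilator_bilin_ext_fst[where P = dw_left, OF f g dw_left_in_dwords forms(1)])
    show "bilin_ext dw_left g f \<in> exterior_annihilator"
      by (rule exterior_annihilator_bilin_ext_snd[where P = dw_left, OF f g dw_left_in_dwords forms(2)])
    show "bilin_ext dw_right f g \<in> exterior_annihilator"
      by (rule exterior_annihilator_bilin_ext_fst[where P = dw_right, OF f g dw_right_in_dwords forms(3)])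
    show "bilin_ext dw_right g f \<in> exterior_annihilator"
      by (rule exterior_annihilator_bilin_ext_snd[where P = dw_right, OF f g dw_right_in_dwords forms(4)])
  next
    fix f g :: "'a dword \<Rightarrow> 'b" assume f: "f \<in> exterior_annihilator" and g: "g \<in> exterior_annihilator"
    then have "f \<in> diasV" "g \<in> diasV" by (simp_all add: exterior_annihilator_def)
    moreover from this have "finite (supp f)" "finite (supp g)" by (simp_all add: diasV_def)
    ultimately show "(\<lambda>w. f w + g w) \<in> exterior_annihilator"
      using f g by (simp add: exterior_annihilator_def diasV_add pairing_add)
  next
    fix f :: "'a dword \<Rightarrow> 'b" and c assume f: "f \<in> exterior_annihilator"
    then have "f \<in> diasV" by (simp add: exterior_annihilator_def)
    moreover from this have "finite (supp f)" by (simp add: diasV_def)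
    ultimately show "(\<lambda>w. c * f w) \<in> exterior_annihilator"
      using f by (simp add: exterior_annihilator_def diasV_scale pairing_scale)
  qed (auto simp: exterior_annihilator_def diasV_def pairing_def)
qed

lemma lambda_gens_subset_exterior_annihilator: "lambda_gens \<subseteq> exterior_annihilator"
proof
  fix g :: "'x dword \<Rightarrow> 'k::field" assume "g \<in> lambda_gens"
  then obtain x y where g: "g = (\<lambda>w. sng ([x, y], 0) w + sng ([y, x], 1) w)"
    unfolding lambda_gens_eq by blast
  have d: "sng ([x, y], 0) \<in> (diasV :: ('x dword \<Rightarrow> 'k) set)" "sng ([y, x], 1) \<in> (diasV :: ('x dword \<Rightarrow> 'k) set)"
    by (auto intro!: sng_in_diasV simp: dwords_def)
  have "pairing c g = 0" if "exterior_form c" for c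
  proof -
    obtain A where A: "\<And>w k. k < length w \<Longrightarrow> c (w, k) = (-1) ^ k * A (w ! k) (del_nth k w)"
      using \<open>exterior_form c\<close> unfolding exterior_form_def by blast
    have "pairing c g = c ([x, y], 0) + c ([y, x], 1)"
      unfolding g by (simp add: pairing_add supp_sng pairing_sng)
    then show ?thesis using A[of 0 "[x, y]"] A[of 1 "[y, x]"] by (simp add: del_nth_def)
  qed
  then show "g \<in> exterior_annihilator"
    using diasV_add[OF d] unfolding exterior_annihilator_def g by blast
qed

fun inversions :: "'a::linorder list \<Rightarrow> nat" where
  "inversions [] = 0"
| "inversions (a # l) = length (filter (\<lambda>b. b < a) l) + inversions l"

lemma inversions_swap:
  "p \<noteq> q \<Longrightarrow> inversions (l1 @ p # q # l2) = Suc (inversions (l1 @ q # p # l2))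
     \<or> Suc (inversions (l1 @ p # q # l2)) = inversions (l1 @ q # p # l2)"
proof (induction l1)
  case Nil
  then show ?case by (cases "p < q") (auto simp: not_less_iff_gr_or_eq)
next
  case (Cons a l1)
  have "length (filter (\<lambda>b. b < a) (l1 @ p # q # l2)) = length (filter (\<lambda>b. b < a) (l1 @ q # p # l2))"
    by simp
  with Cons show ?case by simp
qed

lemma inversions_sorted: "sorted_wrt (<) l \<Longrightarrow> inversions l = 0"
  by (induction l) (auto simp: filter_empty_conv)

definition arrangement_sign :: "'x::linorder set \<Rightarrow> 'x list \<Rightarrow> 'k::comm_ring_1" where
  "arrangement_sign S l = (if distinct l \<and> set l = S then (-1) ^ inversions l else 0)"

lemma skew_symmetric_arrangement_sign:
  "skew_symmetric (arrangement_sign (S :: 'x::linorder set) :: _ \<Rightarrow> 'k::comm_ring_1)"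
  unfolding skew_symmetric_def
proof (intro allI)
  fix l1 l2 :: "'x list" and p q :: 'x
  have set_eq: "set (l1 @ p # q # l2) = set (l1 @ q # p # l2)"
    and distinct_eq: "distinct (l1 @ p # q # l2) = distinct (l1 @ q # p # l2)" by auto
  show "arrangement_sign S (l1 @ p # q # l2) = - (arrangement_sign S (l1 @ q # p # l2) :: 'k)"
  proof (cases "distinct (l1 @ p # q # l2) \<and> set (l1 @ p # q # l2) = S")
    case True
    then have "p \<noteq> q" by auto
    have neg_power: "(-1::'k) ^ a = - ((-1) ^ b)" if "a = Suc b \<or> Suc a = b" for a b
      using that by auto
    have "(-1::'k) ^ inversions (l1 @ p # q # l2) = - ((-1) ^ inversions (l1 @ q # p # l2))"
      by (rule neg_power[OF inversions_swap[OF \<open>p \<noteq> q\<close>]])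
    then show ?thesis using True unfolding arrangement_sign_def set_eq distinct_eq by simp
  next
    case False
    then show ?thesis unfolding arrangement_sign_def set_eq distinct_eq by (simp only: if_False minus_zero)
  qed
qed

definition basis_dual :: "'x::linorder \<Rightarrow> 'x list \<Rightarrow> 'x dword \<Rightarrow> 'k::field" where
  "basis_dual y s = (\<lambda>(w, k). (-1) ^ k * (if w ! k = y then arrangement_sign (set s) (del_nth k w) else 0))"

lemma exterior_form_basis_dual: "exterior_form (basis_dual y s :: _ \<Rightarrow> 'k::field)"
proof (rule exterior_formI[where A = "\<lambda>x l. if x = y then arrangement_sign (set s) l else 0"])
  show "skew_symmetric (\<lambda>l. if x = y then arrangement_sign (set s) l else (0::'k))" for x
    by (cases "x = y") (simp add: skew_symmetric_arrangement_sign, simp add: skew_symmetric_def)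
qed (simp add: basis_dual_def)

lemma basis_dual_lambda_basis:
  assumes "(y # s, 0) \<in> lambda_basis" "u \<in> lambda_basis"
  shows "basis_dual y s u = (if u = (y # s, 0) then 1 else 0)"
proof -
  obtain y' s' where u: "u = (y' # s', 0)" "sorted_wrt (<) s'"
    using assms(2) by (auto simp: lambda_basis_def)
  have s: "sorted_wrt (<) s" using assms(1) by (auto simp: lambda_basis_def)
  show ?thesis
  proof (cases "y' = y \<and> set s' = set s")
    case True
    then have "s' = s" using u(2) s by (metis sorted_distinct_set_unique strict_sorted_iff)
    then show ?thesis
      using True u s by (simp add: basis_dual_def del_nth_def arrangement_sign_def inversions_sorted strict_sorted_iff)
  qed (use u in \<open>auto simp: basis_dual_def del_nth_def arrangement_sign_def\<close>)
qed

lemma lambda_basis_independent: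
  fixes c :: "'x::linorder dword \<Rightarrow> 'k::field"
  assumes "finite A" "A \<subseteq> lambda_basis" "lincomb c A \<in> exterior_annihilator" "b \<in> A"
  shows "c b = 0"
proof -
  obtain y s where b: "b = (y # s, 0)" using assms(2,4) by (auto simp: lambda_basis_def)
  have "\<forall>d. exterior_form d \<longrightarrow> pairing d (lincomb c A) = 0"
    using assms(3) by (simp add: exterior_annihilator_def)
  then have "0 = pairing (basis_dual y s) (lincomb c A)"
    using exterior_form_basis_dual by metis
  also have "\<dots> = (\<Sum>u\<in>A. lincomb c A u * basis_dual y s u)"
    by (rule pairing_eq_sum[OF assms(1)]) (auto simp: lincomb_eq[OF assms(1)] split: if_splits)
  also have "\<dots> = (\<Sum>u\<in>A. if u = b then c u else 0)"
  proof (rule sum.cong[OF refl])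
    fix u assume u: "u \<in> A"
    then have "(y # s, 0) \<in> lambda_basis" "u \<in> lambda_basis" using assms(2,4) b by auto
    then have "basis_dual y s u = (if u = b then 1 else (0::'k))"
      using b by (simp add: basis_dual_lambda_basis)
    then show "lincomb c A u * basis_dual y s u = (if u = b then c u else 0)"
      using u by (cases "u = b") (simp_all add: lincomb_eq[OF assms(1)])
  qed
  also have "\<dots> = c b" using assms(1,4) by (simp add: sum.delta')
  finally show ?thesis by simp
qed

theorem mainTheorem8:
  assumes "(2::'k::field) \<noteq> 0"
  defines "I \<equiv> (dideal_gen (lambda_gens :: ('x::linorder dword \<Rightarrow> 'k) set))"
  shows "(\<forall>f\<in>diasV. \<exists>A c. finite A \<and> A \<subseteq> lambda_basis
              \<and> (\<lambda>w. f w - lincomb c A w) \<in> I)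
       \<and> (\<forall>A c. finite A \<and> A \<subseteq> lambda_basis \<and> lincomb c A \<in> I \<longrightarrow> (\<forall>b\<in>A. c b = 0))"
proof -
  interpret lambda_ideal I
    unfolding I_def
    by unfold_locales (simp_all add: is_dideal_dideal_gen lambda_gens_subset_diasV dideal_gen_superset)
  have "I \<subseteq> exterior_annihilator"
    unfolding I_def
    by (rule dideal_gen_least[OF is_dideal_exterior_annihilator lambda_gens_subset_exterior_annihilator])
  then show ?thesis
    using lambda_basis_spans[OF assms(1)] lambda_basis_independent by blast
qed

end
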